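(* Assume Banderier's conjecture. Then for every $i\ge1$ such that $p_i\#-1$ is not a prime, the primorial $p_i\#$ belongs to the set $S$.
   Context: Let $p_1<p_2<\cdots$ be the primes and $p_i\#=p_1p_2\cdots p_i$ the $i$-th primorial. Banderier's conjecture: for every $i\ge2$, if $q$ is the largest prime smaller than $p_i\#$, then either $p_i\#-q=1$ or $p_i\#-q$ is a prime. Let $S$ be the set of integers $n\ge2$ such that, writing $p^a$ for the largest prime power dividing $n$, there is no prime $q$ with $n-p^a<q<n$. *)

theory Defs
  imports "HOL-Number_Theory.Number_Theory" "HOL-Library.Infinite_Set"
begin

text \<open>The i-th prime, 1-indexed: nth_prime 1 = 2, nth_prime 2 = 3, ...\<close>
definition nth_prime :: "nat \<Rightarrow> nat" where
  "nth_prime i = Infinite_Set.enumerate {p::nat. prime p} (i - 1)"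

definition primorial :: "nat \<Rightarrow> nat" where
  "primorial i = (\<Prod>j\<in>{1..i}. nth_prime j)"

definition prev_prime :: "nat \<Rightarrow> nat" where
  "prev_prime n = (GREATEST q. prime q \<and> q < n)"

definition banderier_conjecture :: bool where
  "banderier_conjecture \<longleftrightarrow>
     (\<forall>i\<ge>2. primorial i - prev_prime (primorial i) = 1
            \<or> prime (primorial i - prev_prime (primorial i)))"

definition max_primepow_dvd :: "nat \<Rightarrow> nat" where
  "max_primepow_dvd n = Max {m. m dvd n \<and> primepow m}"

definition setS :: "nat set" where
  "setS = {n. n \<ge> 2 \<and> \<not> (\<exists>q. prime q \<and> n - max_primepow_dvd n < q \<and> q < n)}"

end

theory Submission
  imports Defs "HOL-Computational_Algebra.Squarefree"
begin

text \<open>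
  Let \<open>P = p\<^sub>i#\<close> with \<open>i \<ge> 2\<close> and let \<open>q\<close> be the largest prime below \<open>P\<close>.
  Since \<open>P - 1\<close> is not prime, Banderier's conjecture makes the gap \<open>r = P - q\<close> a prime.
  If \<open>r \<le> p\<^sub>i\<close>, then \<open>r\<close> divides \<open>P\<close> and hence also \<open>q = P - r\<close>, so \<open>r = q\<close> and
  \<open>P = 2q\<close>; as \<open>3\<close> divides \<open>P\<close> this forces \<open>P = 6\<close>, where the gap is \<open>1\<close>.
  Hence \<open>r > p\<^sub>i\<close>. As \<open>P\<close> is squarefree, its largest prime power divisor is
  \<open>p\<^sub>i < r\<close>, so the interval \<open>(P - p\<^sub>i, P)\<close> lies strictly above \<open>q\<close> and contains no prime.
\<close>

lemma prime_nth_prime: "prime (nth_prime i)"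
  unfolding nth_prime_def using enumerate_in_set[OF primes_infinite] by simp

lemma nth_prime_le_iff: "1 \<le> i \<Longrightarrow> 1 \<le> j \<Longrightarrow> nth_prime i \<le> nth_prime j \<longleftrightarrow> i \<le> j"
  unfolding nth_prime_def using primes_infinite by auto

lemma inj_on_nth_prime: "inj_on nth_prime {1..}"
  by (rule inj_onI) (metis atLeast_iff nth_prime_le_iff order_antisym order_refl)

lemma prime_eq_nth_prime:
  assumes "prime p"
  obtains j where "1 \<le> j" "p = nth_prime j"
proof -
  obtain n where "p = enumerate {p. prime p} n"
    using enumerate_Ex[OF primes_infinite] assms by blast
  then show thesis using that[of "Suc n"] unfolding nth_prime_def by auto
qed

lemma nth_prime_1: "nth_prime 1 = 2"
proof -
  have "(LEAST p::nat. prime p) = 2"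
    by (rule Least_equality) (auto simp: prime_ge_2_nat)
  then show ?thesis unfolding nth_prime_def by (simp add: enumerate_0)
qed

lemma nth_prime_2: "nth_prime 2 = 3"
proof -
  have "(LEAST p::nat. p \<in> {p. prime p} \<and> 2 < p) = 3"
    by (rule Least_equality) auto
  then show ?thesis
    using enumerate_Suc''[OF primes_infinite, of 0] nth_prime_1
    unfolding nth_prime_def by (simp add: numeral_2_eq_2)
qed

lemma primorial_1: "primorial 1 = 2"
  unfolding primorial_def using nth_prime_1 by simp

lemma primorial_2: "primorial 2 = 6"
proof -
  have "{1..2::nat} = {1, 2}" by auto
  then show ?thesis unfolding primorial_def using nth_prime_1 nth_prime_2 by simp
qed

lemma primorial_dvd_primorial: "i \<le> j \<Longrightarrow> primorial i dvd primorial j"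
  unfolding primorial_def by (rule prod_dvd_prod_subset) auto

lemma primorial_pos: "0 < primorial i"
  unfolding primorial_def using prime_nth_prime by (simp add: prime_gt_0_nat)

lemma squarefree_primorial: "squarefree (primorial i)"
  unfolding primorial_def
proof (rule squarefree_prod_coprime)
  fix j k assume "j \<in> {1..i}" "k \<in> {1..i}" "j \<noteq> k"
  then have "nth_prime j \<noteq> nth_prime k"
    using inj_onD[OF inj_on_nth_prime, of j k] by auto
  then show "coprime (nth_prime j) (nth_prime k)"
    by (simp add: primes_coprime prime_nth_prime)
qed (simp add: squarefree_prime prime_nth_prime)

lemma prime_dvd_primorial_iff:
  assumes "prime p"
  shows "p dvd primorial i \<longleftrightarrow> 1 \<le> i \<and> p \<le> nth_prime i"
proof -
  obtain k where k: "1 \<le> k" "p = nth_prime k"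
    using prime_eq_nth_prime[OF assms] by blast
  have "p dvd primorial i \<longleftrightarrow> (\<exists>j\<in>{1..i}. p dvd nth_prime j)"
    unfolding primorial_def using assms by (simp add: prime_dvd_prod_iff)
  also have "\<dots> \<longleftrightarrow> (\<exists>j\<in>{1..i}. p = nth_prime j)"
    using assms prime_nth_prime primes_dvd_imp_eq by (metis dvd_refl)
  also have "\<dots> \<longleftrightarrow> k \<in> {1..i}"
    using k inj_onD[OF inj_on_nth_prime, of k] by auto
  also have "\<dots> \<longleftrightarrow> 1 \<le> i \<and> p \<le> nth_prime i"
    using k nth_prime_le_iff[of k i] by auto
  finally show ?thesis .
qed

lemma primepow_dvd_squarefree_imp_prime:
  fixes m n :: nat
  assumes "squarefree n" "primepow m" "m dvd n"
  shows "prime m"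
proof -
  obtain p k where pk: "prime p" "0 < k" "m = p ^ k"
    using assms(2) unfolding primepow_def by blast
  have "squarefree (p ^ k)"
    using assms(1,3) pk(3) squarefree_mono by blast
  then have "k = 1"
    using pk by (auto simp: squarefree_power_iff)
  with pk show ?thesis by simp
qed

lemma max_primepow_dvd_primorial:
  assumes "1 \<le> i"
  shows "max_primepow_dvd (primorial i) = nth_prime i"
  unfolding max_primepow_dvd_def
proof (rule Max_eqI)
  show "finite {m. m dvd primorial i \<and> primepow m}"
    by (rule finite_subset[of _ "{..primorial i}"]) (auto intro: dvd_imp_le primorial_pos)
  show "nth_prime i \<in> {m. m dvd primorial i \<and> primepow m}"
    using assms prime_nth_prime prime_dvd_primorial_iff primepow_prime by auto
next
  fix m assume "m \<in> {m. m dvd primorial i \<and> primepow m}"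
  then have "prime m" "m dvd primorial i"
    using primepow_dvd_squarefree_imp_prime squarefree_primorial by auto
  then show "m \<le> nth_prime i"
    using prime_dvd_primorial_iff by blast
qed

lemma
  assumes "2 < n"
  shows prime_prev_prime: "prime (prev_prime n)"
    and prev_prime_less: "prev_prime n < n"
    and le_prev_prime: "prime q \<Longrightarrow> q < n \<Longrightarrow> q \<le> prev_prime n"
proof -
  have "prime (prev_prime n) \<and> prev_prime n < n"
    unfolding prev_prime_def by (rule GreatestI_nat[of _ 2 n]) (use assms in auto)
  then show "prime (prev_prime n)" "prev_prime n < n" by auto
  show "q \<le> prev_prime n" if "prime q" "q < n"
    unfolding prev_prime_def by (rule Greatest_le_nat[of _ q n]) (use that in auto)
qed

lemma prime_gap_not_dvd:
  assumes "6 dvd n" and gap: "prime (n - prev_prime n)"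
  shows "\<not> (n - prev_prime n) dvd n"
proof
  define q where "q = prev_prime n"
  assume dvd: "(n - q) dvd n"
  have "n \<noteq> 0" using gap by (cases n) auto
  with \<open>6 dvd n\<close> have "6 \<le> n" by (simp add: dvd_imp_le)
  then have q: "prime q" "q < n"
    unfolding q_def using prime_prev_prime prev_prime_less by auto
  have "(n - q) dvd n - (n - q)"
    using dvd by (rule dvd_diff_nat) simp
  then have "(n - q) dvd q"
    using q(2) by simp
  then have "n - q = q"
    using gap q(1) primes_dvd_imp_eq unfolding q_def by blast
  then have "n = 2 * q" by simp
  with \<open>6 dvd n\<close> have "3 dvd q"
    using prime_dvd_mult_iff[of "3::nat" 2 q] by auto
  then have "q = 3" "n = 6"
    using q(1) primes_dvd_imp_eq[of 3 q] \<open>n = 2 * q\<close> by auto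
  moreover have "5 \<le> prev_prime 6"
    by (rule le_prev_prime) auto
  ultimately show False unfolding q_def by simp
qed

lemma in_setS_if_max_primepow_le_gap:
  assumes "2 < n" "max_primepow_dvd n \<le> n - prev_prime n"
  shows "n \<in> setS"
proof -
  have "q \<le> n - max_primepow_dvd n" if "prime q" "q < n" for q
    using le_prev_prime[OF assms(1) that] prev_prime_less[OF assms(1)] assms(2) by arith
  then show ?thesis
    unfolding setS_def using assms(1) by (auto simp: not_less)
qed

lemma two_in_setS: "2 \<in> setS"
  unfolding setS_def by (auto dest: prime_ge_2_nat)

theorem mainTheorem7:
  assumes "banderier_conjecture"
  shows "\<forall>i\<ge>1. \<not> prime (primorial i - 1) \<longrightarrow> primorial i \<in> setS"
proof (intro allI impI)
  fix i :: nat
  assume "1 \<le> i" and not_prime: "\<not> prime (primorial i - 1)"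
  show "primorial i \<in> setS"
  proof (cases "i = 1")
    case True
    then show ?thesis using primorial_1 two_in_setS by metis
  next
    case False
    with \<open>1 \<le> i\<close> have "2 \<le> i" by simp
    define P where "P = primorial i"
    have "6 dvd P" "2 < P"
      using primorial_dvd_primorial[OF \<open>2 \<le> i\<close>] primorial_pos[of i]
      unfolding P_def primorial_2 by (auto dest: dvd_imp_le)
    have "P - prev_prime P \<noteq> 1"
      using not_prime prime_prev_prime[OF \<open>2 < P\<close>] prev_prime_less[OF \<open>2 < P\<close>]
      unfolding P_def by (metis diff_diff_cancel less_imp_le)
    then have "prime (P - prev_prime P)"
      using assms \<open>2 \<le> i\<close> unfolding banderier_conjecture_def P_def by blast
    then have "nth_prime i < P - prev_prime P"
      using prime_gap_not_dvd[OF \<open>6 dvd P\<close>] prime_dvd_primorial_iff \<open>1 \<le> i\<close>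
      unfolding P_def by (meson not_le)
    then show ?thesis
      using in_setS_if_max_primepow_le_gap[OF \<open>2 < P\<close>] max_primepow_dvd_primorial[OF \<open>1 \<le> i\<close>]
      unfolding P_def by simp
  qed
qed

end
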